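(* Let $A$ be a finite set, let $P$ be a probability measure on $(A^{\mathbb{Z}},\mathfrak{A}^{\mathbb{Z}})$ (not necessarily stationary), and let $h\ge 0$. Then $P$ satisfies condition (B) with respect to $h$ if and only if $P$ satisfies condition (B* ) with respect to $h$.
   Context: $\mathfrak{A}^{\mathbb{Z}}$ is the $\sigma$-field on $A^{\mathbb{Z}}$ generated by cylinder sets. For $n\ge 1$, $A^{(n)}:=\prod_{i=1}^n A$ and $P^{(n)}$ denotes the marginal of $P$ on the coordinates $1,\dots,n$, i.e. $P^{(n)}(\mathbf{x})=P(\{\xi: (\xi_i)_{i=1}^n=\mathbf{x}\})$ for $\mathbf{x}\in A^{(n)}$. For a finite sequence $\mathbf{x}=(x_i)_{i=1}^n$ ($n\ge2$) let $\mathbf{x}_\flat:=(x_i)_{i=1}^{n-1}$, and for a set $C\subseteq A^{(n+1)}$ let $C_\flat:=\{\mathbf{x}_\flat:\mathbf{x}\in C\}$. Condition (B) w.r.t. $h$: for $P$-almost every $(\xi_n)_{n\in\mathbb{Z}}\in A^{\mathbb{Z}}$ the limit $\lim_{n\to\infty}-\frac1n\log P^{(n)}((\xi_i)_{i=1}^n)$ exists and equals $h$. Condition (B* ) w.r.t. $h$: for every $\varepsilon>0$ there exist subsets $C_\varepsilon^{(n)}\subseteq A^{(n)}$, $n\in\mathbb{N}$, and a number $N(\varepsilon)$ such that (1) $C_\varepsilon^{(n)}=(C_\varepsilon^{(n+1)})_\flat$ for all $n\ge1$; (2) $\#C_\varepsilon^{(n)}\in(e^{n(h-\varepsilon)},e^{n(h+\varepsilon)})$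 for $n\ge N(\varepsilon)$; (3) $P^{(n)}(\mathbf{x})<e^{-n(h-\varepsilon)}$ for all $n\ge N(\varepsilon)$ and all $\mathbf{x}\in C_\varepsilon^{(n)}$; (4) $P^{(n)}(C_\varepsilon^{(n)})>1-\varepsilon$ for all $n\ge 1$. *)

theory Defs
  imports "HOL-Probability.Probability"
begin

text \<open>Points of A^Z are functions int => 'a, where the finite alphabet A is the
  finite type 'a. A finite sequence in A^(n) is a list of length n.\<close>

definition word :: "(int \<Rightarrow> 'a) \<Rightarrow> nat \<Rightarrow> 'a list" where
  "word \<xi> n = map \<xi> [1..int n]"

definition marg :: "(int \<Rightarrow> 'a) measure \<Rightarrow> nat \<Rightarrow> 'a list \<Rightarrow> real" where
  "marg P n x = measure P {\<xi> \<in> space P. word \<xi> n = x}"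

definition marg_set :: "(int \<Rightarrow> 'a) measure \<Rightarrow> nat \<Rightarrow> 'a list set \<Rightarrow> real" where
  "marg_set P n C = measure P {\<xi> \<in> space P. word \<xi> n \<in> C}"

definition cond_B :: "(int \<Rightarrow> 'a) measure \<Rightarrow> real \<Rightarrow> bool" where
  "cond_B P h \<longleftrightarrow>
     (AE \<xi> in P. ((\<lambda>n. - (1 / real n) * ln (marg P n (word \<xi> n))) \<longlongrightarrow> h) sequentially)"

definition cond_Bstar :: "(int \<Rightarrow> 'a) measure \<Rightarrow> real \<Rightarrow> bool" where
  "cond_Bstar P h \<longleftrightarrow>
     (\<forall>\<epsilon>>0. \<exists>(C :: nat \<Rightarrow> 'a list set) (N :: nat).
        (\<forall>n\<ge>1. C n \<subseteq> {x. length x = n}) \<and>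
        (\<forall>n\<ge>1. C n = butlast ` C (Suc n)) \<and>
        (\<forall>n\<ge>N. n \<ge> 1 \<longrightarrow>
            exp (real n * (h - \<epsilon>)) < real (card (C n)) \<and>
            real (card (C n)) < exp (real n * (h + \<epsilon>))) \<and>
        (\<forall>n\<ge>N. n \<ge> 1 \<longrightarrow> (\<forall>x\<in>C n. marg P n x < exp (- (real n * (h - \<epsilon>))))) \<and>
        (\<forall>n\<ge>1. marg_set P n (C n) > 1 - \<epsilon>))"

end

theory Submission
  imports Defs
begin

text \<open>(B) implies (B*): by an Egorov-type argument there is a set G of probability > 1 - \<epsilon> on
  which, from some N0 on, every marginal P^(n)(\<xi>_1..\<xi>_n) lies between e^(-n(h + \<epsilon>/2)) and
  e^(-n(h - \<epsilon>/2)). The words read off G form a prefix-closed family C_n of mass > 1 - \<epsilon>,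
  and as each of its words has mass in that window, counting gives
  e^(n(h - \<epsilon>)) < #C_n < e^(n(h + \<epsilon>)) for large n.

  (B*) implies (B): by prefix-closedness the set of \<xi> all of whose initial words lie in the
  C_n is a decreasing intersection of events of probability > 1 - \<epsilon>; on it, condition (3)
  bounds the sample entropy from below by h - \<epsilon>. The words of C_n of mass
  < e^(-n(h + 2\<epsilon>)) have total mass at most #C_n e^(-n(h + 2\<epsilon>)) < e^(-n\<epsilon>), so by Borel-Cantelli
  almost surely only finitely many of them occur, bounding the sample entropy from above
  by h + 2\<epsilon> eventually.\<close>

definition sample_entropy :: "(int \<Rightarrow> 'a) measure \<Rightarrow> nat \<Rightarrow> (int \<Rightarrow> 'a) \<Rightarrow> real" where
  "sample_entropy P n \<xi> = - (1 / real n) * ln (marg P n (word \<xi> n))"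

lemma cond_B_iff_sample_entropy:
  "cond_B P h \<longleftrightarrow> (AE \<xi> in P. (\<lambda>n. sample_entropy P n \<xi>) \<longlonglongrightarrow> h)"
  by (simp add: cond_B_def sample_entropy_def)

lemma cond_BstarE:
  assumes "cond_Bstar P h" "\<epsilon> > 0"
  obtains C N where
    "\<And>n. n \<ge> 1 \<Longrightarrow> C n \<subseteq> {x. length x = n}"
    "\<And>n. n \<ge> 1 \<Longrightarrow> C n = butlast ` C (Suc n)"
    "\<And>n. n \<ge> N \<Longrightarrow> n \<ge> 1 \<Longrightarrow>
       exp (real n * (h - \<epsilon>)) < real (card (C n)) \<and> real (card (C n)) < exp (real n * (h + \<epsilon>))"
    "\<And>n x. n \<ge> N \<Longrightarrow> n \<ge> 1 \<Longrightarrow> x \<in> C n \<Longrightarrow> marg P n x < exp (- (real n * (h - \<epsilon>)))"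
    "\<And>n. n \<ge> 1 \<Longrightarrow> marg_set P n (C n) > 1 - \<epsilon>"
proof -
  obtain C N where
    "\<forall>n\<ge>1. C n \<subseteq> {x. length x = n}" "\<forall>n\<ge>1. C n = butlast ` C (Suc n)"
    "\<forall>n\<ge>N. n \<ge> 1 \<longrightarrow>
       exp (real n * (h - \<epsilon>)) < real (card (C n)) \<and> real (card (C n)) < exp (real n * (h + \<epsilon>))"
    "\<forall>n\<ge>N. n \<ge> 1 \<longrightarrow> (\<forall>x\<in>C n. marg P n x < exp (- (real n * (h - \<epsilon>))))"
    "\<forall>n\<ge>1. marg_set P n (C n) > 1 - \<epsilon>"
    using assms(1)[unfolded cond_Bstar_def, rule_format, OF assms(2)] by blast
  from this[rule_format] show ?thesis by (rule that)
qed

lemma length_word [simp]: "length (word \<xi> n) = n"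
  by (simp add: word_def)

lemma butlast_word_Suc: "butlast (word \<xi> (Suc n)) = word \<xi> n"
proof -
  have "[1..1 + int n] = [1..int n] @ [int n + 1]"
    using upto_rec2[of 1 "1 + int n"] by simp
  then show ?thesis by (simp add: word_def add.commute)
qed

lemma finite_lists_length_eq_UNIV: "finite {xs :: 'a::finite list. length xs = n}"
  using finite_lists_length_eq[of "UNIV :: 'a set" n] by simp

lemma neg_ln_div_bounds_if_exp_bounds:
  fixes p a b :: real and n :: nat
  assumes "n > 0" "exp (- (real n * b)) \<le> p" "p < exp (- (real n * a))"
  shows "a < - (1 / real n) * ln p" "- (1 / real n) * ln p \<le> b"
proof -
  have "p > 0" using assms(2) by (rule less_le_trans[OF exp_gt_zero])
  have "ln p < - (real n * a)"
    using \<open>p > 0\<close> assms(3) by (metis ln_exp ln_less_cancel_iff exp_gt_zero)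
  moreover have "- (real n * b) \<le> ln p"
    using \<open>p > 0\<close> assms(2) by (metis ln_exp ln_le_cancel_iff exp_gt_zero)
  ultimately show "a < - (1 / real n) * ln p" "- (1 / real n) * ln p \<le> b"
    using assms(1) by (simp_all add: field_simps)
qed

lemma exp_bounds_if_neg_ln_div_close:
  fixes p d h :: real and n :: nat
  assumes "n > 0" "p > 0" "\<bar>- (1 / real n) * ln p - h\<bar> < d"
  shows "exp (- (real n * (h + d))) < p \<and> p < exp (- (real n * (h - d)))"
proof -
  have "- (real n * (h + d)) < ln p \<and> ln p < - (real n * (h - d))"
    using assms(1,3) by (simp add: abs_less_iff field_simps)
  then show ?thesis using assms(2) by (metis exp_less_cancel_iff exp_ln)
qed

lemma exp_diff_le_half:
  fixes a x :: real
  assumes "1 \<le> x"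
  shows "exp (a - x) \<le> exp a / 2"
proof -
  have "2 \<le> exp x" using exp_ge_add_one_self[of x] assms by linarith
  then show ?thesis unfolding exp_diff by (intro divide_left_mono) simp_all
qed

lemma AE_tendsto_if_AE_eventually_close:
  fixes f :: "nat \<Rightarrow> 'a \<Rightarrow> 'b::metric_space"
  assumes "\<And>\<delta>. \<delta> > 0 \<Longrightarrow> AE x in M. eventually (\<lambda>n. dist (f n x) l < \<delta>) sequentially"
  shows "AE x in M. (\<lambda>n. f n x) \<longlonglongrightarrow> l"
proof -
  have "AE x in M. \<forall>k::nat. eventually (\<lambda>n. dist (f n x) l < inverse (real (Suc k))) sequentially"
    unfolding AE_all_countable using assms by simp
  then show ?thesis
  proof eventually_elim
    case (elim x)
    show ?case
    proof (rule tendstoI)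
      fix r :: real assume "r > 0"
      then obtain k where k: "inverse (real (Suc k)) < r" using reals_Archimedean by blast
      show "eventually (\<lambda>n. dist (f n x) l < r) sequentially"
        using elim[rule_format, of k] by eventually_elim (use k in simp)
    qed
  qed
qed

lemma (in prob_space) AE_if_AE_on_large_sets:
  assumes "\<And>e. e > 0 \<Longrightarrow> \<exists>S\<in>sets M. prob S \<ge> 1 - e \<and> (AE x in M. x \<in> S \<longrightarrow> Q x)"
  shows "AE x in M. Q x"
proof -
  obtain S where S: "\<And>j. S j \<in> sets M" "\<And>j. prob (S j) \<ge> 1 - inverse (real (Suc j))"
      "\<And>j. AE x in M. x \<in> S j \<longrightarrow> Q x"
    using assms[of "inverse (real (Suc _))"]
    by (metis of_nat_0_less_iff positive_imp_inverse_positive zero_less_Suc)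
  have U: "(\<Union>j. S j) \<in> sets M" using S(1) by auto
  have "prob (\<Union>j. S j) \<ge> 1 - inverse (real (Suc j))" for j
    using finite_measure_mono[OF _ U, of "S j"] S(2)[of j] by fastforce
  moreover have "(\<lambda>j. 1 - inverse (real (Suc j))) \<longlonglongrightarrow> 1"
    using tendsto_diff[OF tendsto_const LIMSEQ_inverse_real_of_nat, of 1] by simp
  ultimately have "prob (\<Union>j. S j) \<ge> 1"
    by (intro LIMSEQ_le_const2) auto
  then have "AE x in M. x \<in> (\<Union>j. S j)"
    using prob_eq_1[OF U] prob_le_1[of "\<Union>j. S j"] by simp
  moreover have "AE x in M. \<forall>j. x \<in> S j \<longrightarrow> Q x"
    unfolding AE_all_countable using S(3) by blast
  ultimately show ?thesis by eventually_elim blast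
qed

lemma (in prob_space) AE_eventually_uniform_on_large_set:
  assumes "AE x in M. eventually (\<lambda>n. Q n x) sequentially"
    and "\<And>n. {x \<in> space M. Q n x} \<in> sets M" and "e > 0"
  obtains N where "{x \<in> space M. \<forall>n\<ge>N. Q n x} \<in> sets M"
    and "prob {x \<in> space M. \<forall>n\<ge>N. Q n x} > 1 - e"
proof -
  define G where "G N = {x \<in> space M. \<forall>n\<ge>N. Q n x}" for N
  have G: "G N \<in> sets M" for N
  proof -
    have "{x \<in> space M. N \<le> n \<longrightarrow> Q n x} \<in> sets M" for n
      using assms(2)[of n] by (cases "N \<le> n") auto
    then show ?thesis unfolding G_def by (rule sets.sets_Collect_countable_All)
  qed
  have "incseq G" by (auto simp: incseq_def G_def)
  then have "(\<lambda>N. prob (G N)) \<longlonglongrightarrow> prob (\<Union>N. G N)"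
    using G by (intro finite_Lim_measure_incseq) auto
  moreover have "AE x in M. x \<in> (\<Union>N. G N)"
    using assms(1) AE_space by eventually_elim (auto simp: G_def eventually_sequentially)
  then have "prob (\<Union>N. G N) = 1"
    using G by (subst prob_eq_1) auto
  ultimately have "eventually (\<lambda>N. prob (G N) > 1 - e) sequentially"
    using assms(3) by (intro order_tendstoD(1)) auto
  then obtain N where "prob (G N) > 1 - e"
    by (auto simp: eventually_sequentially)
  with G that show ?thesis unfolding G_def by blast
qed

lemma measurable_map_components:
  "(\<lambda>\<xi>. map \<xi> ks) \<in> PiM UNIV (\<lambda>_. count_space (UNIV :: 'a::countable set)) \<rightarrow>\<^sub>M count_space UNIV"
proof (induction ks)
  case Nil
  then show ?case by simp
next
  case (Cons k ks)
  have "(\<lambda>\<xi>. c # map \<xi> ks) \<in> PiM UNIV (\<lambda>_. count_space (UNIV :: 'a set)) \<rightarrow>\<^sub>M count_space UNIV"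
    for c :: 'a
    using measurable_compose[OF Cons, of "\<lambda>ys. c # ys" "count_space UNIV"] by (simp add: comp_def)
  moreover have "(\<lambda>\<xi>. \<xi> k) \<in> PiM UNIV (\<lambda>_. count_space (UNIV :: 'a set)) \<rightarrow>\<^sub>M count_space UNIV"
    by (rule measurable_component_singleton) simp
  ultimately show ?case
    using measurable_compose_countable[where f="\<lambda>c \<xi>. c # map \<xi> ks"] by simp
qed

locale finite_alphabet_process = prob_space P for P :: "(int \<Rightarrow> 'a::finite) measure" +
  assumes sets_P: "sets P = sets (PiM UNIV (\<lambda>_::int. count_space (UNIV :: 'a set)))"
begin

lemma space_P: "space P = UNIV"
  using sets_eq_imp_space_eq[OF sets_P] by (simp add: space_PiM)

lemma sets_word_pred: "{\<xi>. Q (word \<xi> n)} \<in> sets P"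
proof -
  have "(\<lambda>\<xi>. word \<xi> n) \<in> P \<rightarrow>\<^sub>M count_space UNIV"
    unfolding word_def using measurable_map_components measurable_cong_sets[OF sets_P refl] by blast
  from measurable_sets[OF this, of "{x. Q x}"] show ?thesis by (simp add: space_P vimage_def)
qed

lemma sets_word_pred_all: "{\<xi>. \<forall>n. Q n (word \<xi> n)} \<in> sets P"
proof -
  have "{\<xi> \<in> space P. Q n (word \<xi> n)} \<in> sets P" for n
    using sets_word_pred[of "Q n" n] unfolding space_P by (simp only: UNIV_I simp_thms)
  from sets.sets_Collect_countable_All[OF this] show ?thesis
    unfolding space_P by (simp only: UNIV_I simp_thms)
qed

lemma marg_set_eq_sum:
  assumes "C \<subseteq> {x. length x = n}"
  shows "marg_set P n C = (\<Sum>x\<in>C. marg P n x)"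
proof -
  have "finite C" using finite_subset[OF assms finite_lists_length_eq_UNIV] .
  moreover have "{\<xi> \<in> space P. word \<xi> n \<in> C} = (\<Union>x\<in>C. {\<xi>. word \<xi> n = x})"
    by (auto simp: space_P)
  ultimately show ?thesis
    unfolding marg_set_def marg_def space_P
    by (auto intro!: finite_measure_finite_Union sets_word_pred simp: disjoint_family_on_def)
qed

lemma marg_set_le_card_mult:
  assumes "C \<subseteq> {x. length x = n}" "\<And>x. x \<in> C \<Longrightarrow> marg P n x \<le> b"
  shows "marg_set P n C \<le> real (card C) * b"
  using sum_bounded_above[of C "marg P n" b] assms by (simp add: marg_set_eq_sum)

lemma card_mult_le_marg_set:
  assumes "C \<subseteq> {x. length x = n}" "\<And>x. x \<in> C \<Longrightarrow> b \<le> marg P n x"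
  shows "real (card C) * b \<le> marg_set P n C"
  using sum_bounded_below[of C b "marg P n"] assms by (simp add: marg_set_eq_sum)

lemma card_le_exp_if_marg_ge:
  assumes "C \<subseteq> {x. length x = n}" "\<And>x. x \<in> C \<Longrightarrow> exp (- a) \<le> marg P n x"
  shows "real (card C) \<le> exp a"
proof -
  have "real (card C) * exp (- a) \<le> marg_set P n C"
    using assms by (rule card_mult_le_marg_set)
  also have "\<dots> \<le> 1"
    unfolding marg_set_def by (rule prob_le_1)
  finally show ?thesis
    by (simp add: exp_minus divide_inverse[symmetric])
qed

lemma mult_exp_less_card_if_marg_le:
  assumes "C \<subseteq> {x. length x = n}" "\<And>x. x \<in> C \<Longrightarrow> marg P n x \<le> exp (- a)"
    and "m < marg_set P n C"
  shows "m * exp a < real (card C)"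
proof -
  have "m * exp a < marg_set P n C * exp a"
    using assms(3) by simp
  also have "\<dots> \<le> real (card C) * exp (- a) * exp a"
    using marg_set_le_card_mult[OF assms(1,2)] by simp
  also have "\<dots> = real (card C)"
    by (simp add: exp_minus)
  finally show ?thesis .
qed

lemma card_bounds_if_marg_window:
  assumes len: "C \<subseteq> {x. length x = n}" and mass: "marg_set P n C > 1 / 2"
    and lower: "\<And>x. x \<in> C \<Longrightarrow> exp (- (real n * (h + d))) \<le> marg P n x"
    and upper: "\<And>x. x \<in> C \<Longrightarrow> marg P n x \<le> exp (- (real n * (h - d)))"
    and "1 \<le> real n * d"
  shows "exp (real n * (h - 2 * d)) < real (card C)" "real (card C) < exp (real n * (h + 2 * d))"
proof -
  have "exp (real n * (h - 2 * d)) = exp (real n * (h - d) - real n * d)"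
    by (simp add: algebra_simps)
  also have "\<dots> \<le> exp (real n * (h - d)) / 2"
    using \<open>1 \<le> real n * d\<close> by (rule exp_diff_le_half)
  also have "\<dots> < real (card C)"
    using mult_exp_less_card_if_marg_le[OF len upper mass] by simp
  finally show "exp (real n * (h - 2 * d)) < real (card C)" .
  have "real (card C) \<le> exp (real n * (h + d))"
    using len lower by (rule card_le_exp_if_marg_ge)
  also have "\<dots> < exp (real n * (h + 2 * d))"
    using \<open>1 \<le> real n * d\<close> by (simp add: algebra_simps)
  finally show "real (card C) < exp (real n * (h + 2 * d))" .
qed

lemma AE_marg_word_pos: "AE \<xi> in P. \<forall>n. marg P n (word \<xi> n) > 0"
proof -
  have "AE \<xi> in P. word \<xi> n \<noteq> x" if "marg P n x = 0" for n x
  proof -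
    have "{\<xi>. word \<xi> n = x} \<in> null_sets P"
      using that sets_word_pred[of "\<lambda>y. y = x" n]
      by (simp add: marg_def space_P emeasure_eq_measure null_sets_def)
    then show ?thesis using AE_not_in by fastforce
  qed
  then have "AE \<xi> in P. \<forall>n x. marg P n x = 0 \<longrightarrow> word \<xi> n \<noteq> x"
    by (subst AE_all_countable, intro allI, subst AE_all_countable, auto)
  then show ?thesis
    by eventually_elim (metis marg_def measure_nonneg order_le_less)
qed

subsection \<open>From (B) to (B*)\<close>

lemma uniformly_typical_set:
  assumes "cond_B P h" "d > 0" "e > 0"
  obtains G N0 where "G \<in> sets P" "prob G > 1 - e"
    "\<And>\<xi> n. \<xi> \<in> G \<Longrightarrow> n \<ge> N0 \<Longrightarrow>
       exp (- (real n * (h + d))) < marg P n (word \<xi> n) \<and>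
       marg P n (word \<xi> n) < exp (- (real n * (h - d)))"
proof -
  \<comment> \<open>Positivity is recorded separately because of the junk value ln 0 = 0.\<close>
  define Q where "Q n \<xi> \<longleftrightarrow> 0 < marg P n (word \<xi> n) \<and> \<bar>sample_entropy P n \<xi> - h\<bar> < d" for n \<xi>
  have "AE \<xi> in P. eventually (\<lambda>n. Q n \<xi>) sequentially"
    using assms(1) AE_marg_word_pos unfolding cond_B_iff_sample_entropy
  proof eventually_elim
    case (elim \<xi>)
    have "eventually (\<lambda>n. dist (sample_entropy P n \<xi>) h < d) sequentially"
      using elim(1) assms(2) by (simp add: tendsto_iff)
    then show ?case by eventually_elim (use elim(2) in \<open>simp add: Q_def dist_real_def\<close>)
  qed
  moreover have "{\<xi> \<in> space P. Q n \<xi>} \<in> sets P" for n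
    using sets_word_pred[of "\<lambda>x. 0 < marg P n x \<and> \<bar>- (1 / real n) * ln (marg P n x) - h\<bar> < d" n]
    unfolding Q_def sample_entropy_def space_P by (simp only: UNIV_I simp_thms)
  ultimately obtain N where N: "{\<xi> \<in> space P. \<forall>n\<ge>N. Q n \<xi>} \<in> sets P"
    "prob {\<xi> \<in> space P. \<forall>n\<ge>N. Q n \<xi>} > 1 - e"
    using assms(3) by (rule AE_eventually_uniform_on_large_set)
  show ?thesis
  proof (rule that[OF N, of "max N 1"])
    fix \<xi> n assume "\<xi> \<in> {\<xi> \<in> space P. \<forall>n\<ge>N. Q n \<xi>}" "max N 1 \<le> n"
    then have "0 < n" "0 < marg P n (word \<xi> n)"
      "\<bar>- (1 / real n) * ln (marg P n (word \<xi> n)) - h\<bar> < d"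
      by (auto simp: Q_def sample_entropy_def)
    then show "exp (- (real n * (h + d))) < marg P n (word \<xi> n) \<and>
        marg P n (word \<xi> n) < exp (- (real n * (h - d)))"
      by (rule exp_bounds_if_neg_ln_div_close)
  qed
qed

lemma typical_word_family:
  assumes "cond_B P h" "\<epsilon> > 0"
  shows "\<exists>(C :: nat \<Rightarrow> 'a list set) N.
    (\<forall>n\<ge>1. C n \<subseteq> {x. length x = n}) \<and>
    (\<forall>n\<ge>1. C n = butlast ` C (Suc n)) \<and>
    (\<forall>n\<ge>N. n \<ge> 1 \<longrightarrow>
       exp (real n * (h - \<epsilon>)) < real (card (C n)) \<and> real (card (C n)) < exp (real n * (h + \<epsilon>))) \<and>
    (\<forall>n\<ge>N. n \<ge> 1 \<longrightarrow> (\<forall>x\<in>C n. marg P n x < exp (- (real n * (h - \<epsilon>))))) \<and>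
    (\<forall>n\<ge>1. marg_set P n (C n) > 1 - \<epsilon>)"
proof -
  define e where "e = min \<epsilon> (1/2)"
  define d where "d = \<epsilon> / 2"
  have "e > 0" "d > 0" using \<open>\<epsilon> > 0\<close> by (simp_all add: e_def d_def)
  obtain G N0 where G: "G \<in> sets P" "prob G > 1 - e"
    and G_bounds: "\<And>\<xi> n. \<xi> \<in> G \<Longrightarrow> n \<ge> N0 \<Longrightarrow>
       exp (- (real n * (h + d))) < marg P n (word \<xi> n) \<and>
       marg P n (word \<xi> n) < exp (- (real n * (h - d)))"
    using uniformly_typical_set[OF assms(1) \<open>d > 0\<close> \<open>e > 0\<close>] by blast
  define C where "C n = (\<lambda>\<xi>. word \<xi> n) ` G" for n
  define N where "N = max N0 (nat \<lceil>1 / d\<rceil>)"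
  have C_len: "C n \<subseteq> {x. length x = n}" for n by (auto simp: C_def)
  have C_mass: "marg_set P n (C n) > 1 - e" for n
  proof -
    have "prob G \<le> marg_set P n (C n)"
      unfolding marg_set_def using G(1) sets_word_pred[of "\<lambda>x. x \<in> C n" n]
      by (intro finite_measure_mono) (auto simp: C_def space_P)
    with G(2) show ?thesis by linarith
  qed
  have C_lower: "exp (- (real n * (h + d))) \<le> marg P n x"
    and C_upper: "marg P n x < exp (- (real n * (h - d)))" if "n \<ge> N" "x \<in> C n" for n x
    using that G_bounds by (auto simp: C_def N_def intro: less_imp_le)
  show ?thesis
  proof (intro exI[of _ C] exI[of _ N] conjI allI impI ballI)
    fix n :: nat
    show "C n \<subseteq> {x. length x = n}" by (rule C_len)
    show "C n = butlast ` C (Suc n)" by (simp add: C_def image_image butlast_word_Suc)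
    show "marg_set P n (C n) > 1 - \<epsilon>" using C_mass[of n] by (simp add: e_def)
  next
    fix n x assume "n \<ge> N" "x \<in> C n"
    have "exp (- (real n * (h - d))) \<le> exp (- (real n * (h - \<epsilon>)))"
      using \<open>\<epsilon> > 0\<close> by (simp add: d_def mult_left_mono)
    with C_upper[OF \<open>n \<ge> N\<close> \<open>x \<in> C n\<close>]
    show "marg P n x < exp (- (real n * (h - \<epsilon>)))" by linarith
  next
    fix n assume "n \<ge> N"
    then have "1 \<le> real n * d"
      using real_nat_ceiling_ge[of "1 / d"] \<open>d > 0\<close> unfolding N_def by (simp add: field_simps)
    moreover have "marg_set P n (C n) > 1 / 2"
      using C_mass[of n] by (simp add: e_def)
    ultimately have "exp (real n * (h - 2 * d)) < real (card (C n))"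
      "real (card (C n)) < exp (real n * (h + 2 * d))"
      using card_bounds_if_marg_window[OF C_len _ C_lower[OF \<open>n \<ge> N\<close>]] C_upper[OF \<open>n \<ge> N\<close>]
      by (auto intro: less_imp_le)
    then show "exp (real n * (h - \<epsilon>)) < real (card (C n))"
      "real (card (C n)) < exp (real n * (h + \<epsilon>))"
      by (simp_all add: d_def)
  qed
qed

lemma Bstar_if_B:
  assumes "cond_B P h"
  shows "cond_Bstar P h"
  unfolding cond_Bstar_def by (intro allI impI) (rule typical_word_family[OF assms])

subsection \<open>From (B*) to (B)\<close>

lemma prob_words_in_prefix_closed_family:
  assumes prefix: "\<And>n. n \<ge> 1 \<Longrightarrow> C n = butlast ` C (Suc n)"
    and mass: "\<And>n. n \<ge> 1 \<Longrightarrow> marg_set P n (C n) > 1 - \<epsilon>"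
  shows "prob {\<xi>. \<forall>n\<ge>1. word \<xi> n \<in> C n} \<ge> 1 - \<epsilon>"
proof -
  define E where "E k = {\<xi>. word \<xi> (Suc k) \<in> C (Suc k)}" for k
  have E: "range E \<subseteq> sets P"
    unfolding E_def by (auto intro: sets_word_pred)
  have "decseq E"
  proof (rule decseq_SucI)
    fix k
    show "E (Suc k) \<subseteq> E k"
    proof
      fix \<xi> assume "\<xi> \<in> E (Suc k)"
      then have "butlast (word \<xi> (Suc (Suc k))) \<in> butlast ` C (Suc (Suc k))"
        by (simp add: E_def)
      then show "\<xi> \<in> E k"
        using prefix[of "Suc k"] by (simp add: butlast_word_Suc E_def)
    qed
  qed
  with E have lim: "(\<lambda>k. prob (E k)) \<longlonglongrightarrow> prob (\<Inter>k. E k)"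
    by (rule finite_Lim_measure_decseq)
  have "prob (E k) > 1 - \<epsilon>" for k
    using mass[of "Suc k"] by (simp add: marg_set_def E_def space_P)
  then have "1 - \<epsilon> \<le> prob (\<Inter>k. E k)"
    by (intro LIMSEQ_le_const[OF lim]) (auto intro: less_imp_le)
  also have "(\<Inter>k. E k) = {\<xi>. \<forall>n\<ge>1. word \<xi> n \<in> C n}"
    by (auto simp: E_def) (metis One_nat_def Suc_le_D)
  finally show ?thesis .
qed

lemma AE_eventually_no_rare_words:
  assumes len: "\<And>n. n \<ge> N \<Longrightarrow> C n \<subseteq> {x. length x = n}"
    and card: "\<And>n. n \<ge> N \<Longrightarrow> real (card (C n)) \<le> exp (real n * (h + \<epsilon>))"
    and "\<epsilon> > 0"
  shows "AE \<xi> in P. eventually (\<lambda>n. word \<xi> n \<in> C n \<longrightarrow>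
           exp (- (real n * (h + 2 * \<epsilon>))) \<le> marg P n (word \<xi> n)) sequentially"
proof -
  define R where "R n = {x \<in> C n. marg P n x < exp (- (real n * (h + 2 * \<epsilon>)))}" for n
  define A where "A n = {\<xi>. word \<xi> n \<in> R n}" for n
  have A: "A n \<in> sets P" for n
    unfolding A_def by (rule sets_word_pred)
  have A_bound: "prob (A n) \<le> exp (- \<epsilon>) ^ n" if "n \<ge> N" for n
  proof -
    have "R n \<subseteq> C n" by (auto simp: R_def)
    moreover have "finite (C n)"
      using len[OF that] finite_lists_length_eq_UNIV by (rule finite_subset)
    ultimately have "card (R n) \<le> card (C n)" by (rule card_mono[rotated])
    have "prob (A n) = marg_set P n (R n)"
      by (simp add: A_def marg_set_def space_P)
    also have "\<dots> \<le> real (card (R n)) * exp (- (real n * (h + 2 * \<epsilon>)))"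
      using len[OF that] by (intro marg_set_le_card_mult) (auto simp: R_def)
    also have "\<dots> \<le> real (card (C n)) * exp (- (real n * (h + 2 * \<epsilon>)))"
      using \<open>card (R n) \<le> card (C n)\<close> by (intro mult_right_mono) simp_all
    also have "\<dots> \<le> exp (real n * (h + \<epsilon>)) * exp (- (real n * (h + 2 * \<epsilon>)))"
      using card[OF that] by (rule mult_right_mono) simp
    also have "\<dots> = exp (real n * (- \<epsilon>))"
      by (simp add: exp_add[symmetric] algebra_simps)
    also have "\<dots> = exp (- \<epsilon>) ^ n"
      by (rule exp_of_nat_mult)
    finally show ?thesis .
  qed
  have "summable (\<lambda>n. exp (- \<epsilon>) ^ n)"
    using \<open>\<epsilon> > 0\<close> by (intro summable_geometric) simp
  then have "summable (\<lambda>n. prob (A n))"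
    by (rule summable_comparison_test'[where N=N]) (simp add: A_bound)
  then have "AE \<xi> in P. eventually (\<lambda>n. \<xi> \<in> space P - A n) sequentially"
    using A by (intro borel_cantelli_AE1) (auto simp: emeasure_eq_measure)
  then show ?thesis
  proof eventually_elim
    case (elim \<xi>)
    then show ?case
      by eventually_elim (auto simp: A_def R_def not_less)
  qed
qed

lemma AE_eventually_sample_entropy_bounds:
  assumes len: "\<And>n. n \<ge> N \<Longrightarrow> C n \<subseteq> {x. length x = n}"
    and card: "\<And>n. n \<ge> N \<Longrightarrow> real (card (C n)) \<le> exp (real n * (h + \<epsilon>))"
    and upper: "\<And>n x. n \<ge> N \<Longrightarrow> x \<in> C n \<Longrightarrow> marg P n x < exp (- (real n * (h - \<epsilon>)))"
    and "N > 0" "\<epsilon> > 0"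
  shows "AE \<xi> in P. (\<forall>n\<ge>N. word \<xi> n \<in> C n) \<longrightarrow>
           eventually (\<lambda>n. h - \<epsilon> < sample_entropy P n \<xi> \<and>
             sample_entropy P n \<xi> \<le> h + 2 * \<epsilon>) sequentially"
proof -
  have "AE \<xi> in P. eventually (\<lambda>n. word \<xi> n \<in> C n \<longrightarrow>
      exp (- (real n * (h + 2 * \<epsilon>))) \<le> marg P n (word \<xi> n)) sequentially"
    using len card \<open>\<epsilon> > 0\<close> by (rule AE_eventually_no_rare_words)
  then show ?thesis
  proof eventually_elim
    case (elim \<xi>)
    show ?case
    proof
      assume words: "\<forall>n\<ge>N. word \<xi> n \<in> C n"
      from elim eventually_ge_at_top[of N]
      show "eventually (\<lambda>n. h - \<epsilon> < sample_entropy P n \<xi> \<and>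
          sample_entropy P n \<xi> \<le> h + 2 * \<epsilon>) sequentially"
      proof eventually_elim
        case (elim n)
        then have "exp (- (real n * (h + 2 * \<epsilon>))) \<le> marg P n (word \<xi> n)"
          "marg P n (word \<xi> n) < exp (- (real n * (h - \<epsilon>)))"
          using words upper by auto
        moreover have "n > 0" using \<open>N > 0\<close> \<open>n \<ge> N\<close> by simp
        ultimately show ?case
          unfolding sample_entropy_def using neg_ln_div_bounds_if_exp_bounds by blast
      qed
    qed
  qed
qed

lemma large_set_with_sample_entropy_bounds:
  assumes "cond_Bstar P h" "\<epsilon> > 0"
  obtains D where "D \<in> sets P" "prob D \<ge> 1 - \<epsilon>"
    "AE \<xi> in P. \<xi> \<in> D \<longrightarrow> eventually (\<lambda>n. h - \<epsilon> < sample_entropy P n \<xi> \<and>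
       sample_entropy P n \<xi> \<le> h + 2 * \<epsilon>) sequentially"
proof -
  from assms obtain C N where
    len: "\<And>n. n \<ge> 1 \<Longrightarrow> C n \<subseteq> {x. length x = n}" and
    prefix: "\<And>n. n \<ge> 1 \<Longrightarrow> C n = butlast ` C (Suc n)" and
    card: "\<And>n. n \<ge> N \<Longrightarrow> n \<ge> 1 \<Longrightarrow>
      exp (real n * (h - \<epsilon>)) < real (card (C n)) \<and> real (card (C n)) < exp (real n * (h + \<epsilon>))" and
    upper: "\<And>n x. n \<ge> N \<Longrightarrow> n \<ge> 1 \<Longrightarrow> x \<in> C n \<Longrightarrow> marg P n x < exp (- (real n * (h - \<epsilon>)))" and
    mass: "\<And>n. n \<ge> 1 \<Longrightarrow> marg_set P n (C n) > 1 - \<epsilon>"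
    by (rule cond_BstarE) (rule that; assumption)
  define D where "D = {\<xi>. \<forall>n\<ge>1. word \<xi> n \<in> C n}"
  have "D \<in> sets P"
    using sets_word_pred_all[of "\<lambda>n x. 1 \<le> n \<longrightarrow> x \<in> C n"] unfolding D_def .
  moreover have "prob D \<ge> 1 - \<epsilon>"
    unfolding D_def using prefix mass by (rule prob_words_in_prefix_closed_family)
  moreover have "AE \<xi> in P. (\<forall>n\<ge>max N 1. word \<xi> n \<in> C n) \<longrightarrow>
      eventually (\<lambda>n. h - \<epsilon> < sample_entropy P n \<xi> \<and> sample_entropy P n \<xi> \<le> h + 2 * \<epsilon>) sequentially"
  proof (rule AE_eventually_sample_entropy_bounds)
    fix n assume "max N 1 \<le> n"
    then show "C n \<subseteq> {x. length x = n}" using len by simp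
    show "real (card (C n)) \<le> exp (real n * (h + \<epsilon>))"
      using card \<open>max N 1 \<le> n\<close> by (simp add: less_imp_le)
  next
    fix n x assume "max N 1 \<le> n" "x \<in> C n"
    then show "marg P n x < exp (- (real n * (h - \<epsilon>)))" using upper by simp
  qed (simp_all add: \<open>\<epsilon> > 0\<close>)
  then have "AE \<xi> in P. \<xi> \<in> D \<longrightarrow>
      eventually (\<lambda>n. h - \<epsilon> < sample_entropy P n \<xi> \<and> sample_entropy P n \<xi> \<le> h + 2 * \<epsilon>) sequentially"
    by eventually_elim (auto simp: D_def)
  ultimately show ?thesis by (rule that)
qed

lemma AE_eventually_sample_entropy_close_if_Bstar:
  assumes "cond_Bstar P h" "\<delta> > 0"
  shows "AE \<xi> in P. eventually (\<lambda>n. dist (sample_entropy P n \<xi>) h < \<delta>) sequentially"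
proof (rule AE_if_AE_on_large_sets)
  fix e :: real assume "e > 0"
  define \<epsilon> where "\<epsilon> = min e (\<delta> / 3)"
  have "\<epsilon> > 0" "\<epsilon> \<le> e" "\<epsilon> \<le> \<delta> / 3" using \<open>e > 0\<close> \<open>\<delta> > 0\<close> by (simp_all add: \<epsilon>_def)
  obtain D where D: "D \<in> sets P" "prob D \<ge> 1 - \<epsilon>"
    and bounds: "AE \<xi> in P. \<xi> \<in> D \<longrightarrow> eventually (\<lambda>n. h - \<epsilon> < sample_entropy P n \<xi> \<and>
       sample_entropy P n \<xi> \<le> h + 2 * \<epsilon>) sequentially"
    using large_set_with_sample_entropy_bounds[OF assms(1) \<open>\<epsilon> > 0\<close>] by blast
  from bounds have "AE \<xi> in P. \<xi> \<in> D \<longrightarrow>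
      eventually (\<lambda>n. dist (sample_entropy P n \<xi>) h < \<delta>) sequentially"
    by eventually_elim
      (use \<open>\<epsilon> > 0\<close> \<open>\<epsilon> \<le> \<delta> / 3\<close> in \<open>auto elim!: eventually_mono simp: dist_real_def abs_less_iff\<close>)
  moreover have "prob D \<ge> 1 - e"
    using D(2) \<open>\<epsilon> \<le> e\<close> by linarith
  ultimately show "\<exists>S\<in>sets P. 1 - e \<le> prob S \<and> (AE \<xi> in P. \<xi> \<in> S \<longrightarrow>
      eventually (\<lambda>n. dist (sample_entropy P n \<xi>) h < \<delta>) sequentially)"
    using D(1) by blast
qed

lemma B_if_Bstar:
  assumes "cond_Bstar P h"
  shows "cond_B P h"
  unfolding cond_B_iff_sample_entropy
  by (rule AE_tendsto_if_AE_eventually_close)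
    (rule AE_eventually_sample_entropy_close_if_Bstar[OF assms])

end

theorem lemma2p1:
  fixes P :: "(int \<Rightarrow> 'a::finite) measure" and h :: real
  assumes "prob_space P"
    and "sets P = sets (PiM UNIV (\<lambda>_::int. count_space (UNIV :: 'a set)))"
    and "h \<ge> 0"
  shows "cond_B P h \<longleftrightarrow> cond_Bstar P h"
proof -
  interpret finite_alphabet_process P
    by (intro finite_alphabet_process.intro finite_alphabet_process_axioms.intro assms(1,2))
  show ?thesis using B_if_Bstar Bstar_if_B by blast
qed

end
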